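(* Suppose $\{\varphi_i\}_{i=1}^N$ is a set of linearly independent unit vectors in $\mathbb{R}^N$ such that the hyperplanes $\{\varphi_i^\perp\}_{i=1}^N$ do norm retrieval in $\mathbb{R}^N$. If $x,y\in\mathbb{R}^N$ satisfy $\langle x,\varphi_i\rangle=\pm1$ and $\langle y,\varphi_i\rangle=\pm1$ for all $i\in\{1,\dots,N\}$ (with signs allowed to depend on $i$ and to differ between $x$ and $y$), then $\|x\|=\|y\|$.
   Context: For a nonzero vector $\varphi\in\mathbb{R}^N$, $\varphi^\perp=\{x\in\mathbb{R}^N:\langle x,\varphi\rangle=0\}$. A family of subspaces $\{W_i\}_{i=1}^M$ of $\mathbb{R}^N$ with orthogonal projections $\{P_i\}_{i=1}^M$ does norm retrieval if for all $x,y\in\mathbb{R}^N$, $\|P_ix\|=\|P_iy\|$ for all $i$ implies $\|x\|=\|y\|$. *)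

theory Defs
  imports "HOL-Analysis.Analysis"
begin

definition orth_proj :: "('a::euclidean_space) set \<Rightarrow> 'a \<Rightarrow> 'a" where
  "orth_proj W x = (THE p. p \<in> W \<and> (\<forall>w\<in>W. inner (x - p) w = 0))"

definition perp_hyperplane :: "('a::euclidean_space) \<Rightarrow> 'a set" where
  "perp_hyperplane \<phi> = {x. inner x \<phi> = 0}"

definition does_norm_retrieval :: "'i set \<Rightarrow> ('i \<Rightarrow> ('a::euclidean_space) set) \<Rightarrow> bool" where
  "does_norm_retrieval I W \<longleftrightarrow>
     (\<forall>x y. (\<forall>i\<in>I. norm (orth_proj (W i) x) = norm (orth_proj (W i) y)) \<longrightarrow> norm x = norm y)"

end

theory Submission
  imports Defs
begin

text \<open>For a unit vector \<open>\<phi>\<close>, \<open>\<parallel>P z\<parallel>\<^sup>2 = \<parallel>z\<parallel>\<^sup>2 - \<langle>z,\<phi>\<rangle>\<^sup>2\<close> for the projection onto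
\<open>\<phi>\<^sup>\<perp>\<close>. If all coefficients of \<open>x\<close> and \<open>y\<close>
have the same absolute value \<open>c \<noteq> 0\<close>, then \<open>\<parallel>P\<^sub>i x\<parallel>\<^sup>2 = \<parallel>x\<parallel>\<^sup>2 - c\<^sup>2\<close> is independent of \<open>i\<close>,
and rescaling \<open>x\<close> by \<open>\<surd>(\<parallel>y\<parallel>\<^sup>2 - c\<^sup>2)\<close> and \<open>y\<close> by \<open>\<surd>(\<parallel>x\<parallel>\<^sup>2 - c\<^sup>2)\<close> makes every projection
norm equal to \<open>\<surd>((\<parallel>x\<parallel>\<^sup>2 - c\<^sup>2)(\<parallel>y\<parallel>\<^sup>2 - c\<^sup>2))\<close>. Norm retrieval then yields
\<open>(\<parallel>y\<parallel>\<^sup>2 - c\<^sup>2)\<parallel>x\<parallel>\<^sup>2 = (\<parallel>x\<parallel>\<^sup>2 - c\<^sup>2)\<parallel>y\<parallel>\<^sup>2\<close>, i.e. \<open>\<parallel>x\<parallel> = \<parallel>y\<parallel>\<close>.\<close>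

lemma orth_proj_eqI:
  fixes W :: "'a::euclidean_space set"
  assumes W: "subspace W" and p: "p \<in> W" and orth: "\<And>w. w \<in> W \<Longrightarrow> inner (x - p) w = 0"
  shows "orth_proj W x = p"
  unfolding orth_proj_def
proof (rule the_equality)
  show "p \<in> W \<and> (\<forall>w\<in>W. inner (x - p) w = 0)"
    using p orth by blast
next
  fix q assume q: "q \<in> W \<and> (\<forall>w\<in>W. inner (x - q) w = 0)"
  then have diff: "q - p \<in> W"
    using W p by (simp add: subspace_diff)
  have "inner (q - p) (q - p) = inner (x - p) (q - p) - inner (x - q) (q - p)"
    by (simp add: algebra_simps inner_diff_left)
  also have "\<dots> = 0"
    using orth q diff by simp
  finally show "q = p" by simp
qed

lemma orth_proj_perp_hyperplane:
  fixes \<phi> z :: "'a::euclidean_space"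
  assumes "norm \<phi> = 1"
  shows "orth_proj (perp_hyperplane \<phi>) z = z - inner z \<phi> *\<^sub>R \<phi>"
proof (rule orth_proj_eqI)
  have "inner \<phi> \<phi> = 1"
    using assms by (simp add: dot_square_norm)
  then show "z - inner z \<phi> *\<^sub>R \<phi> \<in> perp_hyperplane \<phi>"
    by (simp add: perp_hyperplane_def inner_diff_left)
qed (auto simp: perp_hyperplane_def subspace_hyperplane2 inner_commute)

lemma norm_orth_proj_perp_hyperplane_sq:
  fixes \<phi> z :: "'a::euclidean_space"
  assumes "norm \<phi> = 1"
  shows "(norm (orth_proj (perp_hyperplane \<phi>) z))\<^sup>2 = (norm z)\<^sup>2 - (inner z \<phi>)\<^sup>2"
proof -
  have "inner \<phi> \<phi> = 1"
    using assms by (simp add: dot_square_norm)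
  then have "inner (z - inner z \<phi> *\<^sub>R \<phi>) (z - inner z \<phi> *\<^sub>R \<phi>) = inner z z - (inner z \<phi>)\<^sup>2"
    by (simp add: inner_diff_left inner_diff_right inner_commute power2_eq_square)
  then show ?thesis
    by (simp add: orth_proj_perp_hyperplane[OF assms] dot_square_norm)
qed

lemma norm_eq_if_equal_abs_coefficients:
  fixes \<phi> :: "'i \<Rightarrow> 'a::euclidean_space" and x y :: 'a
  assumes nr: "does_norm_retrieval I (\<lambda>i. perp_hyperplane (\<phi> i))"
    and unit: "\<And>i. i \<in> I \<Longrightarrow> norm (\<phi> i) = 1"
    and "I \<noteq> {}" and "c \<noteq> 0"
    and hx: "\<And>i. i \<in> I \<Longrightarrow> \<bar>inner x (\<phi> i)\<bar> = c"
    and hy: "\<And>i. i \<in> I \<Longrightarrow> \<bar>inner y (\<phi> i)\<bar> = c"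
  shows "norm x = norm y"
proof -
  define X where "X = (norm x)\<^sup>2 - c\<^sup>2"
  define Y where "Y = (norm y)\<^sup>2 - c\<^sup>2"
  obtain i0 where "i0 \<in> I" using \<open>I \<noteq> {}\<close> by blast
  have "c \<le> norm x" "c \<le> norm y"
    using Cauchy_Schwarz_ineq2[of x "\<phi> i0"] Cauchy_Schwarz_ineq2[of y "\<phi> i0"]
      hx hy unit \<open>i0 \<in> I\<close> by auto
  moreover have "0 \<le> c"
    using hx \<open>i0 \<in> I\<close> by force
  ultimately have "X \<ge> 0" "Y \<ge> 0"
    by (simp_all add: X_def Y_def power_mono)
  have proj_sq: "(norm (orth_proj (perp_hyperplane (\<phi> i)) (a *\<^sub>R z)))\<^sup>2 = a\<^sup>2 * ((norm z)\<^sup>2 - c\<^sup>2)"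
    if "i \<in> I" "\<bar>inner z (\<phi> i)\<bar> = c" for i a z
    using norm_orth_proj_perp_hyperplane_sq[OF unit[OF \<open>i \<in> I\<close>], of "a *\<^sub>R z"] that
    by (auto simp: power_mult_distrib algebra_simps)
  have "norm (orth_proj (perp_hyperplane (\<phi> i)) (sqrt Y *\<^sub>R x))
      = norm (orth_proj (perp_hyperplane (\<phi> i)) (sqrt X *\<^sub>R y))" if "i \<in> I" for i
  proof (rule power2_eq_imp_eq)
    show "(norm (orth_proj (perp_hyperplane (\<phi> i)) (sqrt Y *\<^sub>R x)))\<^sup>2
        = (norm (orth_proj (perp_hyperplane (\<phi> i)) (sqrt X *\<^sub>R y)))\<^sup>2"
      using proj_sq[OF that hx[OF that], of "sqrt Y"] proj_sq[OF that hy[OF that], of "sqrt X"]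
        \<open>X \<ge> 0\<close> \<open>Y \<ge> 0\<close>
      by (simp add: X_def[symmetric] Y_def[symmetric])
  qed simp_all
  then have "norm (sqrt Y *\<^sub>R x) = norm (sqrt X *\<^sub>R y)"
    using nr unfolding does_norm_retrieval_def by blast
  then have "Y * (norm x)\<^sup>2 = X * (norm y)\<^sup>2"
    using \<open>X \<ge> 0\<close> \<open>Y \<ge> 0\<close>
    by (metis norm_scaleR power_mult_distrib real_sqrt_abs real_sqrt_pow2 abs_of_nonneg)
  then have "(norm x)\<^sup>2 = (norm y)\<^sup>2"
    using \<open>c \<noteq> 0\<close> by (simp add: X_def Y_def algebra_simps)
  then show ?thesis
    by (simp add: power2_eq_iff_nonneg)
qed

theorem mainTheorem4:
  fixes \<phi> :: "'n::finite \<Rightarrow> real^'n" and x y :: "real^'n"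
  assumes indep: "inj \<phi>" "independent (range \<phi>)"
    and unit: "\<And>i. norm (\<phi> i) = 1"
    and nr: "does_norm_retrieval UNIV (\<lambda>i. perp_hyperplane (\<phi> i))"
    and hx: "\<And>i. inner x (\<phi> i) = 1 \<or> inner x (\<phi> i) = -1"
    and hy: "\<And>i. inner y (\<phi> i) = 1 \<or> inner y (\<phi> i) = -1"
  shows "norm x = norm y"
proof (rule norm_eq_if_equal_abs_coefficients[OF nr, where c = 1])
  show "\<bar>inner x (\<phi> i)\<bar> = 1" "\<bar>inner y (\<phi> i)\<bar> = 1" for i
    using hx[of i] hy[of i] by auto
qed (use unit in auto)

end
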